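(* Let $a_1,a_2\in\mathbb{R}$ with $|a_1a_2|=1$, $a_2>0$ and $a_1<0$, and let $$R=\begin{pmatrix} 1 & a_1 \\ a_2 & 1 \end{pmatrix}.$$ Then for every driving function $f$ the Skorokhod problem with matrix $R$ has a unique solution.
   Context: For $b=(b_1,b_2)\in\mathbb{R}^2$ write $b\ge 0$ if $b_1\ge 0$ and $b_2\ge 0$, and let $D=\{b\in\mathbb{R}^2: b\ge 0\}$. A driving function is a continuous function $f:[0,\infty)\to\mathbb{R}^2$ with $f(0)\ge 0$. Given a real $2\times 2$ matrix $R$ and a driving function $f$, a solution of the Skorokhod problem is a pair $(g,m)$ where (1) $g:[0,\infty)\to D$ is continuous; (2) $m=(m_1,m_2):[0,\infty)\to\mathbb{R}^2$ is continuous with $m(0)=0$ and each $m_j$ non-decreasing; (3) $g(t)=f(t)+Rm(t)$ for all $t\ge 0$; and (4) for $j=1,2$, $m_j$ increases only when $g_j=0$, i.e. $\int_0^\infty g_j(t)\,dm_j(t)=0$. "Unique solution" means there is exactly one such pair $(g,m)$. *)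

theory Defs
  imports "HOL-Analysis.Analysis"
begin

definition nonneg2 :: "real \<times> real \<Rightarrow> bool" where
  "nonneg2 b \<longleftrightarrow> fst b \<ge> 0 \<and> snd b \<ge> 0"

definition mat_app2 :: "real \<Rightarrow> real \<Rightarrow> real \<Rightarrow> real \<Rightarrow> real \<times> real \<Rightarrow> real \<times> real" where
  "mat_app2 r11 r12 r21 r22 b = (r11 * fst b + r12 * snd b, r21 * fst b + r22 * snd b)"

definition driving_function :: "(real \<Rightarrow> real \<times> real) \<Rightarrow> bool" where
  "driving_function f \<longleftrightarrow> continuous_on {0..} f \<and> nonneg2 (f 0)"

text \<open>Lebesgue--Stieltjes integral over [0,\<infinity>) of a nonnegative function h against a
  nondecreasing continuous function F defined on [0,\<infinity>) (extended constantly to the left).\<close>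
definition stieltjes_nn :: "(real \<Rightarrow> real) \<Rightarrow> (real \<Rightarrow> real) \<Rightarrow> ennreal" where
  "stieltjes_nn h F = (\<integral>\<^sup>+ t. ennreal (h t) * indicator {0..} t \<partial>interval_measure (\<lambda>t. F (max 0 t)))"

definition skorokhod_solution ::
  "real \<Rightarrow> real \<Rightarrow> real \<Rightarrow> real \<Rightarrow> (real \<Rightarrow> real \<times> real) \<Rightarrow>
   (real \<Rightarrow> real \<times> real) \<Rightarrow> (real \<Rightarrow> real \<times> real) \<Rightarrow> bool" where
  "skorokhod_solution r11 r12 r21 r22 f g m \<longleftrightarrow>
     continuous_on {0..} g \<and> (\<forall>t\<ge>0. nonneg2 (g t)) \<and>
     continuous_on {0..} m \<and> m 0 = (0, 0) \<and>
     mono_on {0..} (\<lambda>t. fst (m t)) \<and> mono_on {0..} (\<lambda>t. snd (m t)) \<and>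
     (\<forall>t\<ge>0. g t = f t + mat_app2 r11 r12 r21 r22 (m t)) \<and>
     stieltjes_nn (\<lambda>t. fst (g t)) (\<lambda>t. fst (m t)) = 0 \<and>
     stieltjes_nn (\<lambda>t. snd (g t)) (\<lambda>t. snd (m t)) = 0"

text \<open>Functions are only relevant on [0,\<infinity>); uniqueness is up to agreement on [0,\<infinity>).\<close>
definition unique_skorokhod_solution ::
  "real \<Rightarrow> real \<Rightarrow> real \<Rightarrow> real \<Rightarrow> (real \<Rightarrow> real \<times> real) \<Rightarrow> bool" where
  "unique_skorokhod_solution r11 r12 r21 r22 f \<longleftrightarrow>
     (\<exists>g m. skorokhod_solution r11 r12 r21 r22 f g m) \<and>
     (\<forall>g m g' m'. skorokhod_solution r11 r12 r21 r22 f g m \<and>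
        skorokhod_solution r11 r12 r21 r22 f g' m' \<longrightarrow>
        (\<forall>t\<ge>0. g t = g' t \<and> m t = m' t))"

end

theory Submission
  imports Defs
begin

text \<open>With \<open>R = [[1, a1], [a2, 1]]\<close> and \<open>a1 * a2 = -1\<close>, a solution is a pair of coupled
  one-dimensional Skorokhod problems: \<open>m1\<close> regulates \<open>f1 + a1 * m2\<close> and \<open>m2\<close> regulates
  \<open>f2 + a2 * m1\<close>.

  Uniqueness: for two solutions put \<open>u = m1 - m1'\<close> and \<open>v = -a1 * (m2 - m2')\<close>. Then
  \<open>g1 - g1' = u - v\<close> and \<open>g2 - g2' = a2 * (u + v)\<close>, and since a regulator is constant where its
  position is positive, \<open>u\<close> moves towards \<open>v\<close> and \<open>v\<close> towards \<open>-u\<close>. So \<open>max \<bar>u\<bar> \<bar>v\<bar>\<close> never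
  grows and stays \<open>0\<close>.

  Existence: the map \<open>\<Phi>\<close> sending a guess \<open>y\<close> for \<open>m2\<close> to the regulator of
  \<open>f2 + a2 * (regulator of f1 + a1 * y)\<close> is antitone, so \<open>\<Phi> \<circ> \<Phi>\<close> has a fixed point \<open>y1\<close> by
  Knaster--Tarski. With \<open>y2 = \<Phi> y1\<close> this yields a cycle \<open>x1 \<rightarrow> y2 \<rightarrow> x2 \<rightarrow> y1 \<rightarrow> x1\<close> of
  one-dimensional problems. The positions kept nonnegative by \<open>x1\<close> and \<open>x2\<close> differ by a defect
  \<open>\<delta>\<close>, those kept nonnegative by \<open>y2\<close> and \<open>y1\<close> by \<open>a2 * \<delta>\<close>; so \<open>\<delta>\<close> can only move towards \<open>0\<close>
  and vanishes, and then the midpoints \<open>((x1 + x2) / 2, (y1 + y2) / 2)\<close> solve the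
  two-dimensional problem.\<close>

section \<open>Flatness and the Stieltjes condition\<close>

definition flat_where_pos :: "(real \<Rightarrow> real) \<Rightarrow> (real \<Rightarrow> real) \<Rightarrow> bool" where
  "flat_where_pos x h \<longleftrightarrow> (\<forall>p q. 0 \<le> p \<longrightarrow> p \<le> q \<longrightarrow> (\<forall>r\<in>{p..q}. 0 < h r) \<longrightarrow> x p = x q)"

lemma flat_where_posD:
  "flat_where_pos x h \<Longrightarrow> 0 \<le> p \<Longrightarrow> p \<le> q \<Longrightarrow> (\<And>r. r \<in> {p..q} \<Longrightarrow> 0 < h r) \<Longrightarrow> x p = x q"
  unfolding flat_where_pos_def by blast

lemma flat_where_pos_cong:
  assumes "\<And>t. 0 \<le> t \<Longrightarrow> x t = x' t" "\<And>t. 0 \<le> t \<Longrightarrow> h t = h' t"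
  shows "flat_where_pos x h \<longleftrightarrow> flat_where_pos x' h'"
  unfolding flat_where_pos_def using assms by (metis atLeastAtMost_iff order_trans)

lemma emeasure_interval_measure_max0_Icc:
  fixes F :: "real \<Rightarrow> real"
  assumes "continuous_on {0..} F" "mono_on {0..} F" "a \<le> b"
  shows "emeasure (interval_measure (\<lambda>t. F (max 0 t))) {a..b} = ennreal (F (max 0 b) - F (max 0 a))"
proof (rule emeasure_interval_measure_Icc[OF \<open>a \<le> b\<close>])
  show "F (max 0 x) \<le> F (max 0 y)" if "x \<le> y" for x y
    using assms(2) that by (auto simp: mono_on_def)
  show "continuous_on UNIV (\<lambda>t. F (max 0 t))"
    by (rule continuous_on_compose2[OF assms(1)]) (auto intro!: continuous_intros)
qed

lemma flat_where_pos_if_stieltjes_nn_eq_0: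
  fixes F h :: "real \<Rightarrow> real"
  assumes F: "continuous_on {0..} F" "mono_on {0..} F" and h: "continuous_on {0..} h"
    and "stieltjes_nn h F = 0"
  shows "flat_where_pos F h"
  unfolding flat_where_pos_def
proof (intro allI impI)
  fix p q assume pq: "0 \<le> p" "p \<le> q" and pos: "\<forall>r\<in>{p..q}. 0 < h r"
  let ?M = "interval_measure (\<lambda>t. F (max 0 t))"
  have "continuous_on {p..q} h" by (rule continuous_on_subset[OF h]) (use pq in auto)
  then obtain r0 where r0: "r0 \<in> {p..q}" "\<And>r. r \<in> {p..q} \<Longrightarrow> h r0 \<le> h r"
    using continuous_attains_inf[of "{p..q}" h] pq by auto
  have "ennreal (h r0) * emeasure ?M {p..q} = (\<integral>\<^sup>+ t. ennreal (h r0) * indicator {p..q} t \<partial>?M)"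
    by (simp add: nn_integral_cmult_indicator)
  also have "\<dots> \<le> (\<integral>\<^sup>+ t. ennreal (h t) * indicator {0..} t \<partial>?M)"
    by (rule nn_integral_mono) (use r0 pq in \<open>auto simp: indicator_def ennreal_leI\<close>)
  also have "\<dots> = 0" using assms(4) by (simp add: stieltjes_nn_def)
  finally have "ennreal (h r0) * ennreal (F q - F p) = 0"
    using emeasure_interval_measure_max0_Icc[OF F pq(2)] pq by simp
  moreover have "0 < h r0" using pos r0 by auto
  moreover have "F p \<le> F q" using F(2) pq by (auto simp: mono_on_def)
  ultimately show "F p = F q" by (simp add: ennreal_eq_0_iff)
qed

lemma rat_interval_around_pos:
  fixes h :: "real \<Rightarrow> real"
  assumes "continuous_on {0..} h" "0 \<le> t" "0 < h t"
  obtains p q where "p \<in> \<rat>" "q \<in> \<rat>" "0 \<le> p" "p \<le> t" "t \<le> q" "\<forall>r\<in>{p..q}. 0 < h r"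
proof -
  obtain d where d: "0 < d" "\<forall>r\<in>{0..}. dist r t < d \<longrightarrow> dist (h r) (h t) < h t"
    using assms unfolding continuous_on_iff by (meson atLeast_iff)
  obtain p q where p: "p \<in> \<rat>" "t - d < p" "p < t" and q: "q \<in> \<rat>" "t < q" "q < t + d"
    using Rats_dense_in_real[of "t - d" t] Rats_dense_in_real[of t "t + d"] d(1) by auto
  have "max 0 p \<in> \<rat>" using p(1) by (simp add: max_def)
  moreover have "0 < h r" if "r \<in> {max 0 p..q}" for r
  proof -
    have "dist (h r) (h t) < h t" using d(2) that p q by (auto simp: dist_real_def)
    then show ?thesis by (simp add: dist_real_def)
  qed
  ultimately show ?thesis using that[of "max 0 p" q] p q assms(2) by auto
qed

lemma stieltjes_nn_eq_0_if_flat_where_pos: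
  fixes F h :: "real \<Rightarrow> real"
  assumes F: "continuous_on {0..} F" "mono_on {0..} F" and h: "continuous_on {0..} h"
    and flat: "flat_where_pos F h"
  shows "stieltjes_nn h F = 0"
proof -
  let ?M = "interval_measure (\<lambda>t. F (max 0 t))"
  define Q where "Q = {(p, q). p \<in> \<rat> \<and> q \<in> \<rat> \<and> 0 \<le> p \<and> p \<le> q \<and> (\<forall>r\<in>{p..q}. 0 < h r)}"
  have "countable Q"
    by (rule countable_subset[of _ "\<rat> \<times> \<rat>"]) (auto simp: Q_def countable_rat)
  then have null: "(\<Union>(p, q)\<in>Q. {p..q}) \<in> null_sets ?M"
  proof (rule null_sets_UN')
    fix pq assume "pq \<in> Q"
    then obtain p q where pq: "pq = (p, q)" "0 \<le> p" "p \<le> q" "\<forall>r\<in>{p..q}. 0 < h r"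
      by (auto simp: Q_def)
    then have "F p = F q" using flat unfolding flat_where_pos_def by blast
    then show "(case pq of (p, q) \<Rightarrow> {p..q}) \<in> null_sets ?M"
      using emeasure_interval_measure_max0_Icc[OF F pq(3)] pq by (simp add: null_sets_def)
  qed
  have "AE t in ?M. ennreal (h t) * indicator {0..} t = 0"
  proof (rule AE_I'[OF null], safe)
    fix t assume "ennreal (h t) * indicator {0..} t \<noteq> 0"
    then have "0 \<le> t" "0 < h t" by (auto simp: indicator_def ennreal_eq_0_iff split: if_splits)
    then obtain p q where "p \<in> \<rat>" "q \<in> \<rat>" "0 \<le> p" "p \<le> t" "t \<le> q" "\<forall>r\<in>{p..q}. 0 < h r"
      using rat_interval_around_pos[OF h] by blast
    then show "t \<in> (\<Union>(p, q)\<in>Q. {p..q})" unfolding Q_def by force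
  qed
  then have "stieltjes_nn h F = (\<integral>\<^sup>+ t. 0 \<partial>?M)"
    unfolding stieltjes_nn_def by (rule nn_integral_cong_AE)
  then show ?thesis by simp
qed

lemma stieltjes_nn_eq_0_iff_flat_where_pos:
  fixes F h :: "real \<Rightarrow> real"
  assumes "continuous_on {0..} F" "mono_on {0..} F" "continuous_on {0..} h"
  shows "stieltjes_nn h F = 0 \<longleftrightarrow> flat_where_pos F h"
  using assms flat_where_pos_if_stieltjes_nn_eq_0 stieltjes_nn_eq_0_if_flat_where_pos by blast

section \<open>The one-dimensional Skorokhod problem\<close>

text \<open>\<open>regulates x h\<close>: \<open>x\<close> solves the one-dimensional Skorokhod problem for \<open>h\<close>, pushing \<open>h + x\<close>
  into \<open>[0, \<infinity>)\<close> and increasing only where \<open>h + x = 0\<close>; \<open>regulator h\<close> is the classical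
  solution: the supremum of \<open>max 0 (- h s)\<close> over \<open>s \<in> {0..t}\<close>.\<close>
definition regulator :: "(real \<Rightarrow> real) \<Rightarrow> real \<Rightarrow> real" where
  "regulator h t = Sup ((\<lambda>s. max 0 (- h s)) ` {0..t})"

definition regulates :: "(real \<Rightarrow> real) \<Rightarrow> (real \<Rightarrow> real) \<Rightarrow> bool" where
  "regulates x h \<longleftrightarrow> continuous_on {0..} x \<and> mono_on {0..} x \<and> x 0 = 0 \<and>
     (\<forall>t\<ge>0. 0 \<le> h t + x t) \<and> flat_where_pos x (\<lambda>t. h t + x t)"

lemma bdd_below_image_Icc_if_continuous:
  fixes h :: "real \<Rightarrow> real"
  assumes "continuous_on {0..} h"
  shows "bdd_below (h ` {0..t})"
proof -
  have "continuous_on {0..t} h" by (rule continuous_on_subset[OF assms]) auto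
  then have "compact (h ` {0..t})" by (rule compact_continuous_image[OF _ compact_Icc])
  then show ?thesis by (intro bounded_imp_bdd_below compact_imp_bounded)
qed

lemma bdd_below_image_Icc_add_mono:
  fixes h fc w :: "real \<Rightarrow> real"
  assumes "continuous_on {0..} fc" "mono_on {0..} w" "\<And>r. 0 \<le> r \<Longrightarrow> h r = fc r + w r"
  shows "bdd_below (h ` {0..t})"
proof -
  obtain L where L: "\<forall>s\<in>{0..t}. L \<le> fc s"
    using bdd_below_image_Icc_if_continuous[OF assms(1), of t] unfolding bdd_below_def by auto
  show ?thesis
  proof (rule bdd_belowI2)
    fix s assume s: "s \<in> {0..t}"
    then have "w 0 \<le> w s" "L \<le> fc s" using assms(2) L by (auto simp: mono_on_def)
    then show "L + w 0 \<le> h s" using s assms(3)[of s] by auto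
  qed
qed

lemma regulator_upper:
  assumes "bdd_below (h ` {0..t})" "s \<in> {0..t}"
  shows "max 0 (- h s) \<le> regulator h t"
proof -
  obtain L where "\<forall>s\<in>{0..t}. L \<le> h s" using assms(1) unfolding bdd_below_def by auto
  then have "bdd_above ((\<lambda>s. max 0 (- h s)) ` {0..t})"
    by (intro bdd_aboveI2[where M="max 0 (- L)"]) force
  then show ?thesis unfolding regulator_def by (rule cSup_upper[rotated]) (use assms(2) in auto)
qed

lemma regulator_least:
  assumes "0 \<le> t" "\<And>s. s \<in> {0..t} \<Longrightarrow> max 0 (- h s) \<le> M"
  shows "regulator h t \<le> M"
  unfolding regulator_def by (rule cSup_least) (use assms in auto)

lemma regulator_nonneg: "bdd_below (h ` {0..t}) \<Longrightarrow> 0 \<le> t \<Longrightarrow> 0 \<le> regulator h t"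
  using regulator_upper[of h t 0] by auto

lemma add_regulator_nonneg: "bdd_below (h ` {0..t}) \<Longrightarrow> 0 \<le> t \<Longrightarrow> 0 \<le> h t + regulator h t"
  using regulator_upper[of h t t] by auto

lemma regulator_0: "0 \<le> h 0 \<Longrightarrow> regulator h 0 = 0"
  unfolding regulator_def by simp

lemma regulator_mono:
  assumes "bdd_below (h ` {0..t})" "0 \<le> s" "s \<le> t"
  shows "regulator h s \<le> regulator h t"
proof (rule regulator_least)
  show "max 0 (- h r) \<le> regulator h t" if "r \<in> {0..s}" for r
    using regulator_upper[OF assms(1), of r] that assms(3) by simp
qed (use assms in simp)

lemma regulator_antimono:
  assumes "bdd_below (h ` {0..t})" "0 \<le> t" "\<And>s. s \<in> {0..t} \<Longrightarrow> h s \<le> h' s"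
  shows "regulator h' t \<le> regulator h t"
proof (rule regulator_least[OF assms(2)])
  fix s assume s: "s \<in> {0..t}"
  have "max 0 (- h' s) \<le> max 0 (- h s)" using assms(3)[OF s] by auto
  also have "\<dots> \<le> regulator h t" by (rule regulator_upper[OF assms(1) s])
  finally show "max 0 (- h' s) \<le> regulator h t" .
qed

lemma regulator_increment_le:
  assumes "0 \<le> s" "s \<le> t" "mono_on {0..} w" "\<And>r. 0 \<le> r \<Longrightarrow> h r = fc r + w r"
    "\<And>r. r \<in> {s..t} \<Longrightarrow> fc s - e \<le> fc r" "bdd_below (h ` {0..t})"
  shows "\<bar>regulator h t - regulator h s\<bar> \<le> e"
proof -
  have bdd_s: "bdd_below (h ` {0..s})" by (rule bdd_below_mono[OF assms(6)]) (use assms(2) in auto)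
  have e: "0 \<le> e" using assms(5)[of s] assms(2) by simp
  have "regulator h t \<le> regulator h s + e"
  proof (rule regulator_least)
    show "0 \<le> t" using assms(1,2) by simp
    fix r assume r: "r \<in> {0..t}"
    show "max 0 (- h r) \<le> regulator h s + e"
    proof (cases "r \<le> s")
      case True
      have "max 0 (- h r) \<le> regulator h s" by (rule regulator_upper[OF bdd_s]) (use r True in simp)
      then show ?thesis using e by linarith
    next
      case False
      then have "w s \<le> w r" "fc s - e \<le> fc r" using assms(1,3,5) r by (auto simp: mono_on_def)
      moreover have "h r = fc r + w r" "h s = fc s + w s" using assms(1,4) r by simp_all
      ultimately have "- h r \<le> - h s + e" by linarith
      then show ?thesis
        using regulator_nonneg[OF bdd_s assms(1)] add_regulator_nonneg[OF bdd_s assms(1)] e by linarith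
    qed
  qed
  moreover have "regulator h s \<le> regulator h t" by (rule regulator_mono[OF assms(6,1,2)])
  ultimately show ?thesis by simp
qed

lemma continuous_on_regulator:
  assumes "continuous_on {0..} fc" "mono_on {0..} w" "\<And>r. 0 \<le> r \<Longrightarrow> h r = fc r + w r"
  shows "continuous_on {0..} (regulator h)"
  unfolding continuous_on_iff
proof (intro ballI allI impI)
  fix t0 e :: real assume t0: "t0 \<in> {0..}" and e: "0 < e"
  have "0 < e/3" using e by simp
  then obtain d where d: "0 < d" "\<forall>r\<in>{0..}. dist r t0 < d \<longrightarrow> dist (fc r) (fc t0) < e/3"
    using assms(1) t0 unfolding continuous_on_iff by blast
  have "dist (regulator h t) (regulator h t0) < e" if t: "t \<in> {0..}" "dist t t0 < d" for t
  proof -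
    define s s' where "s = min t t0" and "s' = max t t0"
    have near: "\<bar>fc r - fc t0\<bar> < e/3" if "r \<in> {s..s'}" for r
    proof -
      have "r \<in> {0..}" "dist r t0 < d" using that t t0 by (auto simp: s_def s'_def dist_real_def)
      then show ?thesis using d(2) by (simp add: dist_real_def)
    qed
    have "\<bar>regulator h s' - regulator h s\<bar> \<le> 2*e/3"
    proof (rule regulator_increment_le[OF _ _ assms(2,3)])
      show "0 \<le> s" "s \<le> s'" using t t0 by (auto simp: s_def s'_def)
      show "bdd_below (h ` {0..s'})" by (rule bdd_below_image_Icc_add_mono[OF assms])
      fix r assume "r \<in> {s..s'}"
      moreover have "s \<in> {s..s'}" by (simp add: s_def s'_def)
      ultimately show "fc s - 2*e/3 \<le> fc r" using near[of r] near[of s] by arith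
    qed
    moreover have "dist (regulator h t) (regulator h t0) = \<bar>regulator h s' - regulator h s\<bar>"
      by (cases "t \<le> t0") (simp_all add: s_def s'_def dist_real_def abs_minus_commute)
    ultimately show ?thesis using e by linarith
  qed
  then show "\<exists>d>0. \<forall>t\<in>{0..}. dist t t0 < d \<longrightarrow> dist (regulator h t) (regulator h t0) < e"
    using d(1) by blast
qed

text \<open>\<open>regulator h q\<close> is the larger of \<open>regulator h p\<close> and the maximum of \<open>-h\<close> on \<open>[p, q]\<close>; that
  maximum is attained at a point where it lies strictly below the regulator, so it is not larger.\<close>
lemma regulator_flat:
  assumes h: "continuous_on {0..} h" and "0 \<le> p" "p \<le> q"
    and pos: "\<And>r. r \<in> {p..q} \<Longrightarrow> 0 < h r + regulator h r"
  shows "regulator h p = regulator h q"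
proof -
  have bdd: "bdd_below (h ` {0..t})" for t by (rule bdd_below_image_Icc_if_continuous[OF h])
  have "continuous_on {p..q} h" by (rule continuous_on_subset[OF h]) (use assms in auto)
  then obtain r0 where r0: "r0 \<in> {p..q}" "\<And>r. r \<in> {p..q} \<Longrightarrow> h r0 \<le> h r"
    using continuous_attains_inf[of "{p..q}" h] assms(3) by auto
  have "regulator h q \<le> max (regulator h p) (- h r0)"
  proof (rule regulator_least)
    fix s assume s: "s \<in> {0..q}"
    show "max 0 (- h s) \<le> max (regulator h p) (- h r0)"
    proof (cases "s \<le> p")
      case True
      then have "max 0 (- h s) \<le> regulator h p" using regulator_upper[OF bdd, of s p] s by simp
      then show ?thesis by (simp add: le_max_iff_disj)
    next
      case False
      then have "- h s \<le> - h r0" using r0(2)[of s] s by simp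
      then show ?thesis using regulator_nonneg[OF bdd assms(2)] by (simp add: max_def)
    qed
  qed (use assms in simp)
  then have "regulator h q \<le> regulator h p \<or> regulator h q \<le> - h r0" by (simp add: le_max_iff_disj)
  moreover have "regulator h r0 \<le> regulator h q" by (rule regulator_mono[OF bdd]) (use r0 assms in auto)
  moreover have "regulator h p \<le> regulator h q" by (rule regulator_mono[OF bdd]) (use assms in auto)
  moreover have "0 < h r0 + regulator h r0" using pos r0 by simp
  ultimately show ?thesis by linarith
qed

lemma regulates_regulator:
  assumes "continuous_on {0..} h" "0 \<le> h 0"
  shows "regulates (regulator h) h"
proof -
  have bdd: "bdd_below (h ` {0..t})" for t by (rule bdd_below_image_Icc_if_continuous[OF assms(1)])
  have "continuous_on {0..} (regulator h)"
    by (rule continuous_on_regulator[OF assms(1), of "\<lambda>_. 0"]) (auto simp: mono_on_def)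
  moreover have "mono_on {0..} (regulator h)"
    by (auto simp: mono_on_def intro: regulator_mono[OF bdd])
  moreover have "flat_where_pos (regulator h) (\<lambda>t. h t + regulator h t)"
    unfolding flat_where_pos_def using regulator_flat[OF assms(1)] by blast
  ultimately show ?thesis
    unfolding regulates_def using regulator_0[of h, OF assms(2)] add_regulator_nonneg[OF bdd] by blast
qed

lemma regulates_cong:
  assumes "\<And>t. 0 \<le> t \<Longrightarrow> x t = x' t" "\<And>t. 0 \<le> t \<Longrightarrow> h t = h' t"
  shows "regulates x h \<longleftrightarrow> regulates x' h'"
proof -
  have "continuous_on {0..} x \<longleftrightarrow> continuous_on {0..} x'" by (rule continuous_on_cong) (use assms in auto)
  moreover have "mono_on {0..} x \<longleftrightarrow> mono_on {0..} x'" unfolding mono_on_def using assms by auto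
  moreover have "flat_where_pos x (\<lambda>t. h t + x t) \<longleftrightarrow> flat_where_pos x' (\<lambda>t. h' t + x' t)"
    by (rule flat_where_pos_cong) (use assms in auto)
  moreover have "(\<forall>t\<ge>0. 0 \<le> h t + x t) \<longleftrightarrow> (\<forall>t\<ge>0. 0 \<le> h' t + x' t)" using assms by simp
  ultimately show ?thesis unfolding regulates_def using assms(1)[of 0] by simp
qed

section \<open>Barrier arguments on the half-line\<close>

lemma continuous_on_le_on_right_interval:
  fixes \<phi> :: "real \<Rightarrow> real"
  assumes "continuous_on {0..} \<phi>" "0 \<le> \<tau>" "\<phi> \<tau> < c"
  obtains r where "\<tau> < r" "\<forall>x\<in>{\<tau>..r}. \<phi> x \<le> c"
proof -
  have "0 < c - \<phi> \<tau>" using assms(3) by simp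
  then obtain d where d: "0 < d" "\<forall>y\<in>{0..}. dist y \<tau> < d \<longrightarrow> dist (\<phi> y) (\<phi> \<tau>) < c - \<phi> \<tau>"
    using assms(1,2) unfolding continuous_on_iff by blast
  have "\<phi> x \<le> c" if "x \<in> {\<tau>..\<tau> + d/2}" for x
  proof -
    have "dist (\<phi> x) (\<phi> \<tau>) < c - \<phi> \<tau>" using d that assms(2) by (simp add: dist_real_def)
    then show ?thesis by (simp add: dist_real_def)
  qed
  then show ?thesis using that[of "\<tau> + d/2"] d(1) by simp
qed

lemma le_level_if_nonincreasing_above_level:
  fixes \<phi> :: "real \<Rightarrow> real"
  assumes cont: "continuous_on {s..t} \<phi>" and start: "\<phi> s \<le> c"
    and dec: "\<And>p q. s \<le> p \<Longrightarrow> p \<le> q \<Longrightarrow> q \<le> t \<Longrightarrow> (\<And>z. z \<in> {p..q} \<Longrightarrow> c < \<phi> z) \<Longrightarrow> \<phi> q \<le> \<phi> p"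
    and x: "x \<in> {s..t}"
  shows "\<phi> x \<le> c"
proof (rule ccontr)
  assume "\<not> \<phi> x \<le> c"
  then have xc: "c < \<phi> x" by simp
  define A where "A = {y \<in> {s..x}. \<phi> y \<le> c}"
  have "continuous_on {s..x} \<phi>" by (rule continuous_on_subset[OF cont]) (use x in auto)
  then have "closed A" unfolding A_def
    by (rule continuous_on_closed_Collect_le[OF _ continuous_on_const closed_atLeastAtMost])
  moreover have "s \<in> A" "bdd_above A" using x start by (auto simp: A_def intro: bdd_aboveI[where M=x])
  ultimately have "Sup A \<in> A" by (intro closed_contains_Sup) auto
  define \<sigma> where "\<sigma> = Sup A"
  have \<sigma>: "s \<le> \<sigma>" "\<sigma> < x" "\<phi> \<sigma> \<le> c"
    using \<open>Sup A \<in> A\<close> xc unfolding \<sigma>_def A_def by (auto simp: order.order_iff_strict)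
  have above: "c < \<phi> y" if "\<sigma> < y" "y \<le> x" for y
  proof (rule ccontr)
    assume "\<not> c < \<phi> y"
    then have "y \<in> A" using that \<sigma> by (auto simp: A_def)
    then have "y \<le> \<sigma>" unfolding \<sigma>_def by (rule cSup_upper[OF _ \<open>bdd_above A\<close>])
    then show False using that by simp
  qed
  have "\<sigma> \<in> {s..t}" "0 < \<phi> x - c" using \<sigma> x xc by auto
  then obtain d where d: "0 < d" "\<forall>y\<in>{s..t}. dist y \<sigma> < d \<longrightarrow> dist (\<phi> y) (\<phi> \<sigma>) < \<phi> x - c"
    using cont unfolding continuous_on_iff by blast
  define p where "p = min x (\<sigma> + d/2)"
  have p: "\<sigma> < p" "p \<le> x" "dist p \<sigma> < d" using \<sigma> d(1) by (auto simp: p_def dist_real_def)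
  have "\<phi> x \<le> \<phi> p" by (rule dec) (use p \<sigma> x above in auto)
  moreover have "dist (\<phi> p) (\<phi> \<sigma>) < \<phi> x - c" using d(2) p \<sigma> x by auto
  ultimately show False using \<sigma> unfolding dist_real_def by linarith
qed

lemma le_level_via_companion:
  fixes \<alpha> \<beta> :: "real \<Rightarrow> real"
  assumes cont: "continuous_on {s..t} \<beta>" and start: "\<beta> s \<le> c" and bound: "\<forall>x\<in>{s..t}. \<alpha> x \<le> c"
    and dec: "\<And>p q. s \<le> p \<Longrightarrow> p \<le> q \<Longrightarrow> (\<And>z. z \<in> {p..q} \<Longrightarrow> \<alpha> z < \<beta> z) \<Longrightarrow> \<beta> q \<le> \<beta> p"
  shows "\<forall>x\<in>{s..t}. \<beta> x \<le> c"
proof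
  fix x assume x: "x \<in> {s..t}"
  show "\<beta> x \<le> c"
  proof (rule le_level_if_nonincreasing_above_level[where \<phi>=\<beta>, OF cont start _ x])
    fix p q assume pq: "s \<le> p" "p \<le> q" "q \<le> t" and above: "\<And>z. z \<in> {p..q} \<Longrightarrow> c < \<beta> z"
    show "\<beta> q \<le> \<beta> p"
    proof (rule dec[OF pq(1,2)])
      fix z assume z: "z \<in> {p..q}"
      then have "\<alpha> z \<le> c" using bound pq by auto
      then show "\<alpha> z < \<beta> z" using above[OF z] by linarith
    qed
  qed
qed

lemma atLeast_subset_if_extends_right:
  fixes S :: "real set"
  assumes "closed S" "s \<in> S"
    and step: "\<And>\<tau>. \<tau> \<in> S \<Longrightarrow> s \<le> \<tau> \<Longrightarrow> \<exists>r>\<tau>. {\<tau>..r} \<subseteq> S"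
  shows "{s..} \<subseteq> S"
proof
  fix x assume x: "x \<in> {s..}"
  define A where "A = S \<inter> {s..x}"
  have "closed A" using assms(1) by (simp add: A_def closed_Int)
  moreover have "s \<in> A" "bdd_above A" using assms(2) x by (auto simp: A_def intro: bdd_aboveI[where M=x])
  ultimately have \<sigma>: "Sup A \<in> A" by (intro closed_contains_Sup) auto
  show "x \<in> S"
  proof (rule ccontr)
    assume "x \<notin> S"
    then have "Sup A < x" "s \<le> Sup A" "Sup A \<in> S" using \<sigma> by (auto simp: A_def order.order_iff_strict)
    then obtain r where r: "Sup A < r" "{Sup A..r} \<subseteq> S" using step by blast
    then have "min r x \<in> A" using \<open>Sup A < x\<close> \<open>s \<le> Sup A\<close> by (auto simp: A_def)
    then have "min r x \<le> Sup A" by (rule cSup_upper[OF _ \<open>bdd_above A\<close>])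
    then show False using r(1) \<open>Sup A < x\<close> by simp
  qed
qed

section \<open>Uniqueness\<close>

text \<open>Here \<open>u\<close> is pulled towards \<open>v\<close> and \<open>v\<close> towards \<open>-u\<close>, so \<open>max \<bar>u\<bar> \<bar>v\<bar>\<close> cannot grow:
  a bound on one of the four quantities \<open>\<plusminus>u\<close>, \<open>\<plusminus>v\<close> propagates around the cycle
  \<open>u \<rightarrow> -v \<rightarrow> -u \<rightarrow> v \<rightarrow> u\<close>.\<close>
locale cross_damped_pair =
  fixes u v :: "real \<Rightarrow> real"
  assumes cont_u: "continuous_on {0..} u" and cont_v: "continuous_on {0..} v"
    and u_dec: "\<And>p q. 0 \<le> p \<Longrightarrow> p \<le> q \<Longrightarrow> (\<And>r. r \<in> {p..q} \<Longrightarrow> v r < u r) \<Longrightarrow> u q \<le> u p"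
    and u_inc: "\<And>p q. 0 \<le> p \<Longrightarrow> p \<le> q \<Longrightarrow> (\<And>r. r \<in> {p..q} \<Longrightarrow> u r < v r) \<Longrightarrow> u p \<le> u q"
    and v_dec: "\<And>p q. 0 \<le> p \<Longrightarrow> p \<le> q \<Longrightarrow> (\<And>r. r \<in> {p..q} \<Longrightarrow> - u r < v r) \<Longrightarrow> v q \<le> v p"
    and v_inc: "\<And>p q. 0 \<le> p \<Longrightarrow> p \<le> q \<Longrightarrow> (\<And>r. r \<in> {p..q} \<Longrightarrow> v r < - u r) \<Longrightarrow> v p \<le> v q"
begin

lemma bound_persists:
  assumes "0 \<le> \<tau>" "0 < c" "\<bar>u \<tau>\<bar> \<le> c" "\<bar>v \<tau>\<bar> \<le> c"
  shows "\<exists>r>\<tau>. \<forall>x\<in>{\<tau>..r}. \<bar>u x\<bar> \<le> c \<and> \<bar>v x\<bar> \<le> c"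
proof -
  obtain r where r: "\<tau> < r" and start: "(\<forall>x\<in>{\<tau>..r}. u x \<le> c) \<or> (\<forall>x\<in>{\<tau>..r}. - u x \<le> c)"
  proof (cases "u \<tau> < c")
    case True
    then show ?thesis using continuous_on_le_on_right_interval[OF cont_u assms(1)] that by blast
  next
    case False
    then have "- u \<tau> < c" using assms(2,3) by linarith
    then show ?thesis
      using continuous_on_le_on_right_interval[OF continuous_on_minus[OF cont_u] assms(1)] that by blast
  qed
  have cont: "continuous_on {\<tau>..r} u" "continuous_on {\<tau>..r} v"
    using assms(1) by (auto intro: continuous_on_subset[OF cont_u] continuous_on_subset[OF cont_v])
  have "\<forall>x\<in>{\<tau>..r}. - v x \<le> c" if "\<forall>x\<in>{\<tau>..r}. u x \<le> c"
  proof (rule le_level_via_companion[OF continuous_on_minus[OF cont(2)] _ that])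
    fix p q assume "\<tau> \<le> p" "p \<le> q" "\<And>z. z \<in> {p..q} \<Longrightarrow> u z < - v z"
    then have "v p \<le> v q" using assms(1) by (intro v_inc) force+
    then show "- v q \<le> - v p" by simp
  qed (use assms(4) in simp)
  moreover have "\<forall>x\<in>{\<tau>..r}. - u x \<le> c" if "\<forall>x\<in>{\<tau>..r}. - v x \<le> c"
  proof (rule le_level_via_companion[OF continuous_on_minus[OF cont(1)] _ that])
    fix p q assume "\<tau> \<le> p" "p \<le> q" "\<And>z. z \<in> {p..q} \<Longrightarrow> - v z < - u z"
    then have "u p \<le> u q" using assms(1) by (intro u_inc) force+
    then show "- u q \<le> - u p" by simp
  qed (use assms(3) in simp)
  moreover have "\<forall>x\<in>{\<tau>..r}. v x \<le> c" if "\<forall>x\<in>{\<tau>..r}. - u x \<le> c"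
  proof (rule le_level_via_companion[OF cont(2) _ that])
    fix p q assume "\<tau> \<le> p" "p \<le> q" "\<And>z. z \<in> {p..q} \<Longrightarrow> - u z < v z"
    then show "v q \<le> v p" using assms(1) by (intro v_dec) force+
  qed (use assms(4) in simp)
  moreover have "\<forall>x\<in>{\<tau>..r}. u x \<le> c" if "\<forall>x\<in>{\<tau>..r}. v x \<le> c"
  proof (rule le_level_via_companion[OF cont(1) _ that])
    fix p q assume "\<tau> \<le> p" "p \<le> q" "\<And>z. z \<in> {p..q} \<Longrightarrow> v z < u z"
    then show "u q \<le> u p" using assms(1) by (intro u_dec) force+
  qed (use assms(3) in simp)
  ultimately have "\<forall>x\<in>{\<tau>..r}. u x \<le> c \<and> - u x \<le> c \<and> v x \<le> c \<and> - v x \<le> c"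
    using start by blast
  then show ?thesis using r by (intro exI[of _ r]) (auto simp: abs_le_iff)
qed

lemma vanishes:
  assumes "u 0 = 0" "v 0 = 0" "0 \<le> t"
  shows "u t = 0 \<and> v t = 0"
proof -
  have "\<bar>u t\<bar> \<le> c \<and> \<bar>v t\<bar> \<le> c" if c: "0 < c" for c
  proof -
    let ?S = "{x \<in> {0..}. max \<bar>u x\<bar> \<bar>v x\<bar> \<le> c}"
    have "closed ?S"
      by (rule continuous_on_closed_Collect_le) (auto intro!: continuous_intros cont_u cont_v)
    then have "{0..} \<subseteq> ?S"
    proof (rule atLeast_subset_if_extends_right)
      show "0 \<in> ?S" using assms c by simp
      fix \<tau> assume "\<tau> \<in> ?S" "0 \<le> \<tau>"
      then obtain r where "\<tau> < r" "\<forall>x\<in>{\<tau>..r}. \<bar>u x\<bar> \<le> c \<and> \<bar>v x\<bar> \<le> c"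
        using bound_persists[OF _ c] by auto
      then show "\<exists>r>\<tau>. {\<tau>..r} \<subseteq> ?S" using \<open>0 \<le> \<tau>\<close> by auto
    qed
    then show ?thesis using assms(3) by auto
  qed
  then have "\<bar>u t\<bar> \<le> 0" "\<bar>v t\<bar> \<le> 0" using field_le_epsilon[of "\<bar>u t\<bar>" 0] field_le_epsilon[of "\<bar>v t\<bar>" 0]
    by auto
  then show ?thesis by simp
qed

end

lemma regulates_diff_nonincreasing:
  assumes "regulates x h" "regulates x' h'" "0 \<le> p" "p \<le> q"
    and above: "\<And>r. r \<in> {p..q} \<Longrightarrow> h' r + x' r < h r + x r"
  shows "x q - x' q \<le> x p - x' p"
proof -
  have "x p = x q"
  proof (rule flat_where_posD[OF _ assms(3,4)])
    show "flat_where_pos x (\<lambda>t. h t + x t)" using assms(1) by (simp add: regulates_def)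
    fix r assume r: "r \<in> {p..q}"
    then have "0 \<le> h' r + x' r" using assms(2,3) by (simp add: regulates_def)
    then show "0 < h r + x r" using above[OF r] by linarith
  qed
  moreover have "x' p \<le> x' q" using assms(2,3,4) by (auto simp: regulates_def mono_on_def)
  ultimately show ?thesis by simp
qed

lemma coupled_regulators_differences_nonincreasing:
  assumes a: "a1 * a2 = -1" "0 < a2"
    and x: "regulates x (\<lambda>t. f1 t + a1 * y t)" and y: "regulates y (\<lambda>t. f2 t + a2 * x t)"
    and x': "regulates x' (\<lambda>t. f1 t + a1 * y' t)" and y': "regulates y' (\<lambda>t. f2 t + a2 * x' t)"
    and pq: "0 \<le> p" "p \<le> q"
  shows "(\<And>r. r \<in> {p..q} \<Longrightarrow> - a1 * (y r - y' r) < x r - x' r) \<Longrightarrow> x q - x' q \<le> x p - x' p"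
    and "(\<And>r. r \<in> {p..q} \<Longrightarrow> x' r - x r < - a1 * (y r - y' r)) \<Longrightarrow>
      - a1 * (y q - y' q) \<le> - a1 * (y p - y' p)"
proof -
  show "x q - x' q \<le> x p - x' p" if "\<And>r. r \<in> {p..q} \<Longrightarrow> - a1 * (y r - y' r) < x r - x' r"
    by (rule regulates_diff_nonincreasing[OF x x' pq]) (use that in \<open>simp add: algebra_simps\<close>)
  assume below: "\<And>r. r \<in> {p..q} \<Longrightarrow> x' r - x r < - a1 * (y r - y' r)"
  have "y q - y' q \<le> y p - y' p"
  proof (rule regulates_diff_nonincreasing[OF y y' pq])
    fix r assume "r \<in> {p..q}"
    then have "x' r - x r < - a1 * (y r - y' r)" by (rule below)
    then have "a2 * (x' r - x r) < a2 * (- a1 * (y r - y' r))" using a(2) by (rule mult_strict_left_mono)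
    also have "\<dots> = - (a1 * a2) * (y r - y' r)" by (simp add: algebra_simps)
    also have "\<dots> = y r - y' r" using a(1) by simp
    finally show "f2 r + a2 * x' r + y' r < f2 r + a2 * x r + y r" by (simp add: algebra_simps)
  qed
  moreover have "0 \<le> - a1" using a by (smt (verit) mult_nonneg_nonneg)
  ultimately show "- a1 * (y q - y' q) \<le> - a1 * (y p - y' p)" by (rule mult_left_mono)
qed

lemma coupled_regulators_unique:
  assumes a: "a1 * a2 = -1" "0 < a2"
    and x: "regulates x (\<lambda>t. f1 t + a1 * y t)" and y: "regulates y (\<lambda>t. f2 t + a2 * x t)"
    and x': "regulates x' (\<lambda>t. f1 t + a1 * y' t)" and y': "regulates y' (\<lambda>t. f2 t + a2 * x' t)"
    and "0 \<le> t"
  shows "x t = x' t \<and> y t = y' t"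
proof -
  define u v where "u t = x t - x' t" and "v t = - a1 * (y t - y' t)" for t
  note forward = coupled_regulators_differences_nonincreasing[OF a x y x' y']
    and backward = coupled_regulators_differences_nonincreasing[OF a x' y' x y]
  interpret cross_damped_pair u v
  proof
    show "continuous_on {0..} u" "continuous_on {0..} v"
      using x x' y y' unfolding u_def v_def regulates_def by (auto intro!: continuous_intros)
  next
    fix p q :: real assume pq: "0 \<le> p" "p \<le> q"
    show "u q \<le> u p" if "\<And>r. r \<in> {p..q} \<Longrightarrow> v r < u r"
      using forward(1)[OF pq] that by (simp add: u_def v_def)
    show "u p \<le> u q" if "\<And>r. r \<in> {p..q} \<Longrightarrow> u r < v r"
      using backward(1)[OF pq] that by (simp add: u_def v_def algebra_simps)
    show "v q \<le> v p" if "\<And>r. r \<in> {p..q} \<Longrightarrow> - u r < v r"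
      using forward(2)[OF pq] that by (simp add: u_def v_def)
    show "v p \<le> v q" if "\<And>r. r \<in> {p..q} \<Longrightarrow> v r < - u r"
      using backward(2)[OF pq] that by (simp add: u_def v_def algebra_simps)
  qed
  have "u 0 = 0" "v 0 = 0" using x x' y y' by (simp_all add: u_def v_def regulates_def)
  then have "u t = 0" "v t = 0" using vanishes \<open>0 \<le> t\<close> by auto
  moreover have "a1 \<noteq> 0" using a(1) by auto
  ultimately show ?thesis by (simp add: u_def v_def)
qed

section \<open>Existence\<close>

lemma regulates_midpoint:
  assumes x1: "regulates x1 h1" and x2: "regulates x2 h2"
    and eq1: "\<And>t. 0 \<le> t \<Longrightarrow> h1 t + x1 t = h t + (x1 t + x2 t) / 2"
    and eq2: "\<And>t. 0 \<le> t \<Longrightarrow> h2 t + x2 t = h t + (x1 t + x2 t) / 2"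
  shows "regulates (\<lambda>t. (x1 t + x2 t) / 2) h"
proof -
  have "continuous_on {0..} (\<lambda>t. (x1 t + x2 t) / 2)"
    using x1 x2 unfolding regulates_def by (intro continuous_intros) auto
  moreover have "mono_on {0..} (\<lambda>t. (x1 t + x2 t) / 2)"
  proof (rule mono_onI)
    fix r s :: real assume "r \<in> {0..}" "s \<in> {0..}" "r \<le> s"
    moreover have "mono_on {0..} x1" "mono_on {0..} x2" using x1 x2 by (simp_all add: regulates_def)
    ultimately have "x1 r \<le> x1 s" "x2 r \<le> x2 s" by (simp_all add: mono_onD)
    then show "(x1 r + x2 r) / 2 \<le> (x1 s + x2 s) / 2" by simp
  qed
  moreover have "flat_where_pos (\<lambda>t. (x1 t + x2 t) / 2) (\<lambda>t. h t + (x1 t + x2 t) / 2)"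
    unfolding flat_where_pos_def
  proof (intro allI impI)
    fix p q assume pq: "0 \<le> p" "p \<le> q" and pos: "\<forall>r\<in>{p..q}. 0 < h r + (x1 r + x2 r) / 2"
    have "flat_where_pos x1 (\<lambda>t. h1 t + x1 t)" "flat_where_pos x2 (\<lambda>t. h2 t + x2 t)"
      using x1 x2 by (simp_all add: regulates_def)
    moreover have "0 < h1 r + x1 r" "0 < h2 r + x2 r" if "r \<in> {p..q}" for r
      using pos eq1[of r] eq2[of r] pq that by auto
    ultimately have "x1 p = x1 q" "x2 p = x2 q" using pq by (blast intro: flat_where_posD)+
    then show "(x1 p + x2 p) / 2 = (x1 q + x2 q) / 2" by simp
  qed
  moreover have "0 \<le> h t + (x1 t + x2 t) / 2" if t: "0 \<le> t" for t
  proof -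
    have "0 \<le> h1 t + x1 t" using x1 t by (simp add: regulates_def)
    then show ?thesis using eq1[OF t] by linarith
  qed
  moreover have "(x1 0 + x2 0) / 2 = 0" using x1 x2 by (simp add: regulates_def)
  ultimately show ?thesis unfolding regulates_def by blast
qed

locale regulator_cycle =
  fixes a1 a2 :: real and f1 f2 x1 y1 x2 y2 :: "real \<Rightarrow> real"
  assumes a: "a1 * a2 = -1" "0 < a2"
    and x1: "regulates x1 (\<lambda>t. f1 t + a1 * y1 t)" and y2: "regulates y2 (\<lambda>t. f2 t + a2 * x1 t)"
    and x2: "regulates x2 (\<lambda>t. f1 t + a1 * y2 t)" and y1: "regulates y1 (\<lambda>t. f2 t + a2 * x2 t)"
begin

text \<open>The gap between the positions \<open>f1 + a1 * y1 + x1\<close> and \<open>f1 + a1 * y2 + x2\<close>; the positions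
  regulated by \<open>y2\<close> and \<open>y1\<close> differ by \<open>a2 * defect\<close>.\<close>
definition defect :: "real \<Rightarrow> real" where
  "defect t = x1 t - x2 t + a1 * (y1 t - y2 t)"

lemma a2_mult_defect: "a2 * defect t = a2 * (x1 t - x2 t) + (y2 t - y1 t)"
proof -
  have "a2 * defect t = a2 * (x1 t - x2 t) + (a1 * a2) * (y1 t - y2 t)" by (simp add: defect_def algebra_simps)
  then show ?thesis using a(1) by simp
qed

lemma defect_nonincreasing:
  assumes pq: "0 \<le> p" "p \<le> q" and pos: "\<And>r. r \<in> {p..q} \<Longrightarrow> 0 < defect r"
  shows "defect q \<le> defect p"
proof -
  have "x1 q - x2 q \<le> x1 p - x2 p"
  proof (rule regulates_diff_nonincreasing[OF x1 x2 pq])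
    fix r assume "r \<in> {p..q}"
    then have "0 < defect r" by (rule pos)
    then show "f1 r + a1 * y2 r + x2 r < f1 r + a1 * y1 r + x1 r" by (simp add: defect_def algebra_simps)
  qed
  moreover have "y2 q - y1 q \<le> y2 p - y1 p"
  proof (rule regulates_diff_nonincreasing[OF y2 y1 pq])
    fix r assume "r \<in> {p..q}"
    then have "0 < a2 * defect r" using pos a(2) by simp
    then show "f2 r + a2 * x2 r + y1 r < f2 r + a2 * x1 r + y2 r" by (simp add: a2_mult_defect algebra_simps)
  qed
  moreover have "a1 < 0" using a by (smt (verit) mult_nonneg_nonneg)
  ultimately have "a1 * ((y1 q - y2 q) - (y1 p - y2 p)) \<le> 0"
    by (intro mult_nonpos_nonneg) simp_all
  moreover have "defect q - defect p = ((x1 q - x2 q) - (x1 p - x2 p)) + a1 * ((y1 q - y2 q) - (y1 p - y2 p))"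
    by (simp add: defect_def algebra_simps)
  ultimately show ?thesis using \<open>x1 q - x2 q \<le> x1 p - x2 p\<close> by linarith
qed

lemma defect_eq_0:
  assumes t: "0 \<le> t"
  shows "defect t = 0"
proof -
  interpret swapped: regulator_cycle a1 a2 f1 f2 x2 y2 x1 y1
    using a x1 x2 y1 y2 by unfold_locales
  have swapped_defect: "swapped.defect r = - defect r" for r
    by (simp add: defect_def swapped.defect_def algebra_simps)
  have cont: "continuous_on {0..} defect"
    using x1 x2 y1 y2 unfolding defect_def regulates_def by (intro continuous_intros) auto
  have defect_0: "defect 0 = 0" using x1 x2 y1 y2 by (simp add: defect_def regulates_def)
  have "defect t \<le> 0"
  proof (rule le_level_if_nonincreasing_above_level[where \<phi>=defect and s=0 and t=t])
    show "continuous_on {0..t} defect" by (rule continuous_on_subset[OF cont]) auto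
    fix p q assume "0 \<le> p" "p \<le> q" "q \<le> t" "\<And>z. z \<in> {p..q} \<Longrightarrow> 0 < defect z"
    then show "defect q \<le> defect p" by (intro defect_nonincreasing) auto
  qed (use defect_0 t in simp_all)
  moreover have "swapped.defect t \<le> 0"
  proof (rule le_level_if_nonincreasing_above_level[where \<phi>=swapped.defect and s=0 and t=t])
    show "continuous_on {0..t} swapped.defect"
      unfolding swapped_defect by (rule continuous_on_subset[OF continuous_on_minus[OF cont]]) auto
    fix p q assume "0 \<le> p" "p \<le> q" "q \<le> t" "\<And>z. z \<in> {p..q} \<Longrightarrow> 0 < swapped.defect z"
    then show "swapped.defect q \<le> swapped.defect p" by (intro swapped.defect_nonincreasing) auto
  qed (use defect_0 t swapped_defect in simp_all)
  ultimately show ?thesis using swapped_defect[of t] by simp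
qed

lemma regulates_midpoints:
  shows "regulates (\<lambda>t. (x1 t + x2 t) / 2) (\<lambda>t. f1 t + a1 * ((y1 t + y2 t) / 2))"
    and "regulates (\<lambda>t. (y1 t + y2 t) / 2) (\<lambda>t. f2 t + a2 * ((x1 t + x2 t) / 2))"
proof -
  show "regulates (\<lambda>t. (x1 t + x2 t) / 2) (\<lambda>t. f1 t + a1 * ((y1 t + y2 t) / 2))"
  proof (rule regulates_midpoint[OF x1 x2])
    fix t :: real assume "0 \<le> t"
    then have "x2 t + a1 * y2 t = x1 t + a1 * y1 t" using defect_eq_0 by (simp add: defect_def algebra_simps)
    moreover have "f1 t + a1 * ((y1 t + y2 t) / 2) + (x1 t + x2 t) / 2
        = f1 t + ((x1 t + a1 * y1 t) + (x2 t + a1 * y2 t)) / 2" by (simp add: field_simps)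
    ultimately show "f1 t + a1 * y1 t + x1 t = f1 t + a1 * ((y1 t + y2 t) / 2) + (x1 t + x2 t) / 2"
      and "f1 t + a1 * y2 t + x2 t = f1 t + a1 * ((y1 t + y2 t) / 2) + (x1 t + x2 t) / 2"
      by (simp_all add: field_simps)
  qed
  show "regulates (\<lambda>t. (y1 t + y2 t) / 2) (\<lambda>t. f2 t + a2 * ((x1 t + x2 t) / 2))"
  proof (rule regulates_midpoint[OF y1 y2])
    fix t :: real assume "0 \<le> t"
    then have "a2 * x2 t + y1 t = a2 * x1 t + y2 t"
      using defect_eq_0 a2_mult_defect[of t] by (simp add: algebra_simps)
    moreover have "f2 t + a2 * ((x1 t + x2 t) / 2) + (y1 t + y2 t) / 2
        = f2 t + ((a2 * x1 t + y2 t) + (a2 * x2 t + y1 t)) / 2" by (simp add: field_simps)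
    ultimately show "f2 t + a2 * x2 t + y1 t = f2 t + a2 * ((x1 t + x2 t) / 2) + (y1 t + y2 t) / 2"
      and "f2 t + a2 * x1 t + y2 t = f2 t + a2 * ((x1 t + x2 t) / 2) + (y1 t + y2 t) / 2"
      by (simp_all add: field_simps)
  qed
qed

end

definition pointwise_between :: "'a set \<Rightarrow> ('a \<Rightarrow> real) \<Rightarrow> ('a \<Rightarrow> real) \<Rightarrow> ('a \<Rightarrow> real) \<Rightarrow> bool" where
  "pointwise_between T lo hi z \<longleftrightarrow> (\<forall>t\<in>T. lo t \<le> z t \<and> z t \<le> hi t)"

text \<open>Knaster--Tarski: the pointwise supremum of all \<open>z\<close> with \<open>z \<le> K z\<close> is a fixed point.\<close>
lemma mono_map_has_fixpoint_between:
  fixes K :: "('a \<Rightarrow> real) \<Rightarrow> 'a \<Rightarrow> real"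
  assumes lo_between: "pointwise_between T lo hi lo"
    and into: "\<And>z. pointwise_between T lo hi z \<Longrightarrow> pointwise_between T lo hi (K z)"
    and mono: "\<And>z z' t. pointwise_between T lo hi z \<Longrightarrow> pointwise_between T lo hi z' \<Longrightarrow>
      (\<forall>s\<in>T. z s \<le> z' s) \<Longrightarrow> t \<in> T \<Longrightarrow> K z t \<le> K z' t"
  obtains z where "pointwise_between T lo hi z" "\<forall>t\<in>T. K z t = z t"
proof -
  define P where "P = {z. pointwise_between T lo hi z \<and> (\<forall>t\<in>T. z t \<le> K z t)}"
  define y where "y t = Sup ((\<lambda>z. z t) ` P)" for t
  have "lo \<in> P" using lo_between into[OF lo_between] by (simp add: P_def pointwise_between_def)
  have le_y: "z t \<le> y t" if "z \<in> P" "t \<in> T" for z t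
    unfolding y_def
    by (rule cSup_upper) (use that in \<open>auto simp: P_def pointwise_between_def intro!: bdd_aboveI[where M="hi t"]\<close>)
  have y_le: "y t \<le> b" if "t \<in> T" "\<And>z. z \<in> P \<Longrightarrow> z t \<le> b" for t b
    unfolding y_def by (rule cSup_least) (use \<open>lo \<in> P\<close> that in auto)
  have y: "pointwise_between T lo hi y"
    unfolding pointwise_between_def
    using le_y[OF \<open>lo \<in> P\<close>] y_le by (auto simp: P_def pointwise_between_def)
  have y_le_Ky: "y t \<le> K y t" if "t \<in> T" for t
  proof (rule y_le[OF that])
    fix z assume z: "z \<in> P"
    then have "z t \<le> K z t" using that by (simp add: P_def)
    also have "\<dots> \<le> K y t" by (rule mono) (use z y le_y that in \<open>auto simp: P_def\<close>)
    finally show "z t \<le> K y t" .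
  qed
  have "K y \<in> P" unfolding P_def
    using into[OF y] mono[OF y into[OF y]] y_le_Ky by blast
  then have "\<forall>t\<in>T. K y t = y t" using le_y y_le_Ky by (auto intro: antisym)
  then show ?thesis using that y by blast
qed

context
  fixes a1 a2 :: real and f1 f2 :: "real \<Rightarrow> real"
  assumes a1: "a1 < 0" and a2: "0 < a2"
    and f1: "continuous_on {0..} f1" and f2: "continuous_on {0..} f2"
begin

text \<open>The map \<open>\<Phi>\<close> of the existence argument; being antitone, \<open>\<Phi> \<circ> \<Phi>\<close> is monotone.\<close>
definition cross_regulator :: "(real \<Rightarrow> real) \<Rightarrow> real \<Rightarrow> real" where
  "cross_regulator z = regulator (\<lambda>t. f2 t + a2 * regulator (\<lambda>s. f1 s + a1 * z s) t)"

abbreviation in_box :: "(real \<Rightarrow> real) \<Rightarrow> bool" where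
  "in_box \<equiv> pointwise_between {0..} (\<lambda>_. 0) (regulator f2)"

lemma bdd_below_first_input:
  assumes "in_box z"
  shows "bdd_below ((\<lambda>s. f1 s + a1 * z s) ` {0..t})"
proof -
  obtain L where L: "\<forall>s\<in>{0..t}. L \<le> f1 s"
    using bdd_below_image_Icc_if_continuous[OF f1, of t] unfolding bdd_below_def by auto
  show ?thesis
  proof (rule bdd_belowI2)
    fix s assume s: "s \<in> {0..t}"
    have "z s \<le> regulator f2 s" using assms s by (simp add: pointwise_between_def)
    also have "\<dots> \<le> regulator f2 t"
      using regulator_mono[OF bdd_below_image_Icc_if_continuous[OF f2]] s by simp
    finally have "a1 * regulator f2 t \<le> a1 * z s" using a1 by (simp add: mult_left_mono_neg)
    then show "L + a1 * regulator f2 t \<le> f1 s + a1 * z s" using L s by force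
  qed
qed

lemma bdd_below_second_input:
  assumes "\<And>t. 0 \<le> t \<Longrightarrow> 0 \<le> x t"
  shows "bdd_below ((\<lambda>s. f2 s + a2 * x s) ` {0..t})"
proof -
  obtain L where L: "\<forall>s\<in>{0..t}. L \<le> f2 s"
    using bdd_below_image_Icc_if_continuous[OF f2, of t] unfolding bdd_below_def by auto
  show ?thesis
  proof (rule bdd_belowI2)
    fix s assume s: "s \<in> {0..t}"
    then have "0 \<le> a2 * x s" using assms[of s] a2 by simp
    then show "L \<le> f2 s + a2 * x s" using L s by force
  qed
qed

lemma regulator_first_input_nonneg:
  "in_box z \<Longrightarrow> 0 \<le> t \<Longrightarrow> 0 \<le> regulator (\<lambda>s. f1 s + a1 * z s) t"
  by (rule regulator_nonneg[OF bdd_below_first_input])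

lemma cross_regulator_in_box:
  assumes z: "in_box z"
  shows "in_box (cross_regulator z)"
  unfolding pointwise_between_def
proof (intro ballI conjI)
  fix t :: real assume "t \<in> {0..}"
  then have t: "0 \<le> t" by simp
  let ?x = "regulator (\<lambda>s. f1 s + a1 * z s)"
  have x: "\<And>t. 0 \<le> t \<Longrightarrow> 0 \<le> ?x t" using regulator_first_input_nonneg[OF z] by blast
  show "0 \<le> cross_regulator z t"
    unfolding cross_regulator_def by (rule regulator_nonneg[OF bdd_below_second_input[OF x] t])
  show "cross_regulator z t \<le> regulator f2 t"
    unfolding cross_regulator_def
  proof (rule regulator_antimono[OF bdd_below_image_Icc_if_continuous[OF f2] t])
    fix s assume "s \<in> {0..t}"
    then show "f2 s \<le> f2 s + a2 * ?x s" using x[of s] a2 by simp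
  qed
qed

lemma cross_regulator_antimono:
  assumes z: "in_box z" and z': "in_box z'" and le: "\<forall>s\<in>{0..}. z s \<le> z' s" and "0 \<le> t"
  shows "cross_regulator z' t \<le> cross_regulator z t"
proof -
  let ?x = "regulator (\<lambda>s. f1 s + a1 * z s)" and ?x' = "regulator (\<lambda>s. f1 s + a1 * z' s)"
  have x: "\<And>t. 0 \<le> t \<Longrightarrow> 0 \<le> ?x t" using regulator_first_input_nonneg[OF z] by blast
  have x_le: "?x s \<le> ?x' s" if s: "0 \<le> s" for s
  proof (rule regulator_antimono[OF bdd_below_first_input[OF z'] s])
    fix r assume "r \<in> {0..s}"
    then have "a1 * z' r \<le> a1 * z r" using le a1 by (simp add: mult_left_mono_neg)
    then show "f1 r + a1 * z' r \<le> f1 r + a1 * z r" by simp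
  qed
  show ?thesis unfolding cross_regulator_def
  proof (rule regulator_antimono[OF bdd_below_second_input[OF x] \<open>0 \<le> t\<close>])
    fix s assume "s \<in> {0..t}"
    then have "a2 * ?x s \<le> a2 * ?x' s" using x_le[of s] a2 by (simp add: mult_left_mono)
    then show "f2 s + a2 * ?x s \<le> f2 s + a2 * ?x' s" by simp
  qed
qed

lemma exists_regulator_cycle:
  assumes "0 \<le> f1 0" "0 \<le> f2 0"
  obtains x1 y1 x2 y2 where
    "regulates x1 (\<lambda>t. f1 t + a1 * y1 t)" "regulates y2 (\<lambda>t. f2 t + a2 * x1 t)"
    "regulates x2 (\<lambda>t. f1 t + a1 * y2 t)" "regulates y1 (\<lambda>t. f2 t + a2 * x2 t)"
proof -
  have "in_box (\<lambda>_. 0)"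
    using regulator_nonneg[OF bdd_below_image_Icc_if_continuous[OF f2]] by (simp add: pointwise_between_def)
  moreover have "in_box (cross_regulator (cross_regulator z))" if "in_box z" for z
    using that by (intro cross_regulator_in_box)
  moreover have "cross_regulator (cross_regulator z) t \<le> cross_regulator (cross_regulator z') t"
    if "in_box z" "in_box z'" "\<forall>s\<in>{0..}. z s \<le> z' s" "t \<in> {0..}" for z z' t
    using that by (intro cross_regulator_antimono cross_regulator_in_box ballI) auto
  ultimately obtain y1 where y1_box: "in_box y1"
    and fixed: "\<forall>t\<in>{0..}. cross_regulator (cross_regulator y1) t = y1 t"
    using mono_map_has_fixpoint_between[where K="\<lambda>z. cross_regulator (cross_regulator z)"] by blast
  define x1 where "x1 = regulator (\<lambda>t. f1 t + a1 * y1 t)"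
  define y2 where "y2 = regulator (\<lambda>t. f2 t + a2 * x1 t)"
  define x2 where "x2 = regulator (\<lambda>t. f1 t + a1 * y2 t)"
  have y2_box: "in_box y2" using cross_regulator_in_box[OF y1_box] by (simp add: y2_def x1_def cross_regulator_def)
  have y1_eq: "regulator (\<lambda>t. f2 t + a2 * x2 t) t = y1 t" if "0 \<le> t" for t
    using fixed that by (simp add: x2_def y2_def x1_def cross_regulator_def)
  have "y1 0 \<le> regulator f2 0" "0 \<le> y1 0" "y2 0 \<le> regulator f2 0" "0 \<le> y2 0"
    using y1_box y2_box by (simp_all add: pointwise_between_def)
  then have y_0: "y1 0 = 0" "y2 0 = 0" using regulator_0[of f2, OF assms(2)] by simp_all
  have "mono_on {0..} x2"
    unfolding x2_def mono_on_def by (auto intro: regulator_mono[OF bdd_below_first_input[OF y2_box]])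
  then have "continuous_on {0..} (regulator (\<lambda>t. f2 t + a2 * x2 t))"
    by (intro continuous_on_regulator[OF f2, of "\<lambda>t. a2 * x2 t"]) (auto simp: mono_on_def a2)
  then have "continuous_on {0..} y1" by (rule continuous_on_cong[THEN iffD1, OF refl, rotated]) (simp add: y1_eq)
  then have x1: "regulates x1 (\<lambda>t. f1 t + a1 * y1 t)"
    unfolding x1_def using f1 by (intro regulates_regulator continuous_intros) (simp_all add: assms y_0)
  then have y2: "regulates y2 (\<lambda>t. f2 t + a2 * x1 t)"
    unfolding y2_def using f2 by (intro regulates_regulator continuous_intros) (simp_all add: assms regulates_def)
  then have x2: "regulates x2 (\<lambda>t. f1 t + a1 * y2 t)"
    unfolding x2_def using f1 by (intro regulates_regulator continuous_intros) (simp_all add: assms regulates_def)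
  then have "regulates (regulator (\<lambda>t. f2 t + a2 * x2 t)) (\<lambda>t. f2 t + a2 * x2 t)"
    using f2 by (intro regulates_regulator continuous_intros) (simp_all add: assms regulates_def)
  moreover have "regulates (regulator (\<lambda>t. f2 t + a2 * x2 t)) (\<lambda>t. f2 t + a2 * x2 t)
      \<longleftrightarrow> regulates y1 (\<lambda>t. f2 t + a2 * x2 t)"
    by (rule regulates_cong) (simp_all add: y1_eq)
  ultimately have "regulates y1 (\<lambda>t. f2 t + a2 * x2 t)" by simp
  with x1 y2 x2 show ?thesis by (rule that)
qed

end

lemma skorokhod_solution_iff_regulates:
  assumes f: "continuous_on {0..} f"
  shows "skorokhod_solution 1 a1 a2 1 f g m \<longleftrightarrow>
    (\<forall>t\<ge>0. g t = f t + mat_app2 1 a1 a2 1 (m t)) \<and>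
    regulates (\<lambda>t. fst (m t)) (\<lambda>t. fst (f t) + a1 * snd (m t)) \<and>
    regulates (\<lambda>t. snd (m t)) (\<lambda>t. snd (f t) + a2 * fst (m t))"
    (is "_ \<longleftrightarrow> ?eq \<and> regulates ?m1 ?h1 \<and> regulates ?m2 ?h2")
proof -
  have g_eq: "fst (g t) = ?h1 t + ?m1 t" "snd (g t) = ?h2 t + ?m2 t" if "?eq" "0 \<le> t" for t
    using that by (simp_all add: mat_app2_def)
  have "continuous_on {0..} m \<longleftrightarrow> continuous_on {0..} ?m1 \<and> continuous_on {0..} ?m2"
    using continuous_on_fst continuous_on_snd continuous_on_Pair[of "{0..}" ?m1 ?m2] by auto
  moreover have "continuous_on {0..} g" if "?eq" "continuous_on {0..} m"
  proof -
    have "continuous_on {0..} (\<lambda>t. f t + mat_app2 1 a1 a2 1 (m t))"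
      using f that(2) unfolding mat_app2_def
      by (intro continuous_intros continuous_on_Pair) (auto intro: continuous_on_fst continuous_on_snd)
    then show ?thesis by (rule continuous_on_cong[THEN iffD1, OF refl, rotated]) (use that(1) in simp)
  qed
  moreover have "stieltjes_nn (\<lambda>t. fst (g t)) ?m1 = 0 \<longleftrightarrow> flat_where_pos ?m1 (\<lambda>t. ?h1 t + ?m1 t)"
    and "stieltjes_nn (\<lambda>t. snd (g t)) ?m2 = 0 \<longleftrightarrow> flat_where_pos ?m2 (\<lambda>t. ?h2 t + ?m2 t)"
    if eq: "?eq" and cg: "continuous_on {0..} g" and m: "continuous_on {0..} ?m1" "continuous_on {0..} ?m2"
      "mono_on {0..} ?m1" "mono_on {0..} ?m2"
  proof -
    have "stieltjes_nn (\<lambda>t. fst (g t)) ?m1 = 0 \<longleftrightarrow> flat_where_pos ?m1 (\<lambda>t. fst (g t))"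
      by (rule stieltjes_nn_eq_0_iff_flat_where_pos[OF m(1,3) continuous_on_fst[OF cg]])
    also have "\<dots> \<longleftrightarrow> flat_where_pos ?m1 (\<lambda>t. ?h1 t + ?m1 t)"
      by (rule flat_where_pos_cong) (simp_all add: g_eq[OF eq])
    finally show "stieltjes_nn (\<lambda>t. fst (g t)) ?m1 = 0 \<longleftrightarrow> flat_where_pos ?m1 (\<lambda>t. ?h1 t + ?m1 t)" .
    have "stieltjes_nn (\<lambda>t. snd (g t)) ?m2 = 0 \<longleftrightarrow> flat_where_pos ?m2 (\<lambda>t. snd (g t))"
      by (rule stieltjes_nn_eq_0_iff_flat_where_pos[OF m(2,4) continuous_on_snd[OF cg]])
    also have "\<dots> \<longleftrightarrow> flat_where_pos ?m2 (\<lambda>t. ?h2 t + ?m2 t)"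
      by (rule flat_where_pos_cong) (simp_all add: g_eq[OF eq])
    finally show "stieltjes_nn (\<lambda>t. snd (g t)) ?m2 = 0 \<longleftrightarrow> flat_where_pos ?m2 (\<lambda>t. ?h2 t + ?m2 t)" .
  qed
  moreover have "nonneg2 (g t) \<longleftrightarrow> 0 \<le> ?h1 t + ?m1 t \<and> 0 \<le> ?h2 t + ?m2 t" if "?eq" "0 \<le> t" for t
    using g_eq[OF that] by (simp add: nonneg2_def)
  moreover have "m 0 = (0, 0) \<longleftrightarrow> ?m1 0 = 0 \<and> ?m2 0 = 0" by (simp add: prod_eq_iff)
  ultimately show ?thesis unfolding skorokhod_solution_def regulates_def by blast
qed

lemma skorokhod_solution_unique:
  assumes a: "a1 * a2 = -1" "0 < a2" and f: "continuous_on {0..} f"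
    and "skorokhod_solution 1 a1 a2 1 f g m" "skorokhod_solution 1 a1 a2 1 f g' m'" "0 \<le> t"
  shows "g t = g' t \<and> m t = m' t"
proof -
  note sol_iff = skorokhod_solution_iff_regulates[OF f]
  have "fst (m t) = fst (m' t) \<and> snd (m t) = snd (m' t)"
    using assms(4,5) unfolding sol_iff by (intro coupled_regulators_unique[OF a _ _ _ _ assms(6)]) auto
  then have "m t = m' t" by (simp add: prod_eq_iff)
  moreover have "\<forall>t\<ge>0. g t = f t + mat_app2 1 a1 a2 1 (m t)" "\<forall>t\<ge>0. g' t = f t + mat_app2 1 a1 a2 1 (m' t)"
    using assms(4,5) unfolding sol_iff by blast+
  ultimately show ?thesis using assms(6) by simp
qed

lemma skorokhod_solution_exists:
  assumes a: "a1 * a2 = -1" "0 < a2" and "driving_function f"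
  shows "\<exists>g m. skorokhod_solution 1 a1 a2 1 f g m"
proof -
  have f: "continuous_on {0..} f" "0 \<le> fst (f 0)" "0 \<le> snd (f 0)"
    using assms(3) by (simp_all add: driving_function_def nonneg2_def)
  have "a1 < 0" using a by (smt (verit) mult_nonneg_nonneg)
  then obtain x1 y1 x2 y2 where
    "regulates x1 (\<lambda>t. fst (f t) + a1 * y1 t)" "regulates y2 (\<lambda>t. snd (f t) + a2 * x1 t)"
    "regulates x2 (\<lambda>t. fst (f t) + a1 * y2 t)" "regulates y1 (\<lambda>t. snd (f t) + a2 * x2 t)"
    by (rule exists_regulator_cycle[OF _ a(2) continuous_on_fst[OF f(1)] continuous_on_snd[OF f(1)] f(2,3)])
  then interpret cycle: regulator_cycle a1 a2 "\<lambda>t. fst (f t)" "\<lambda>t. snd (f t)" x1 y1 x2 y2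
    using a by unfold_locales
  define m where "m t = ((x1 t + x2 t) / 2, (y1 t + y2 t) / 2)" for t
  have "skorokhod_solution 1 a1 a2 1 f (\<lambda>t. f t + mat_app2 1 a1 a2 1 (m t)) m"
    unfolding skorokhod_solution_iff_regulates[OF f(1)] m_def using cycle.regulates_midpoints by simp
  then show ?thesis by blast
qed

theorem theorem3p2:
  fixes a1 a2 :: real and f :: "real \<Rightarrow> real \<times> real"
  assumes "\<bar>a1 * a2\<bar> = 1" and "a2 > 0" and "a1 < 0"
    and "driving_function f"
  shows "unique_skorokhod_solution 1 a1 a2 1 f"
proof -
  have "a1 * a2 < 0" using assms(2,3) by (simp add: mult_neg_pos)
  then have a: "a1 * a2 = -1" using assms(1) by (simp add: abs_if split: if_splits)
  have "continuous_on {0..} f" using assms(4) by (simp add: driving_function_def)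
  then show ?thesis
    unfolding unique_skorokhod_solution_def
    using skorokhod_solution_exists[OF a assms(2,4)] skorokhod_solution_unique[OF a assms(2)] by blast
qed

end
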